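(* Let $J\subseteq\mathbb R$ be an open interval and let $A:J\to\mathbb R$ be of class $C^3$. Let $x_0\in J$ satisfy $A''(x_0)\neq 0$. Then for every $\epsilon>0$ there exists $\delta=\delta(x_0,A,\epsilon)>0$ such that, setting $I=(x_0-\delta,x_0+\delta)\subset J$ and $\Gamma(I)=\{x+iA(x): x\in I\}$, the following hold for every three-tuple $\mathbf z=(z_1,z_2,z_3)$ of distinct points of $\Gamma(I)$: (a) with $\kappa_0=A''(x_0)/s(x_0)^3$ (the curvature of $\Gamma$ at $z_0=x_0+iA(x_0)$), one has $c^2(\mathbf z)=\kappa_0^2+r(\mathbf z)$ with $|r(\mathbf z)|<\epsilon$; (b) $\bigl|\mathtt S[\mathrm{Re}K_\Gamma](\mathbf z)-\tfrac32 c^2(\mathbf z)\bigr|<\epsilon$ and $\bigl|\mathtt S[\mathrm{Im}K_\Gamma](\mathbf z)+\tfrac12 c^2(\mathbf z)\bigr|<\epsilon$.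
   Context: $\Gamma=\{x+iA(x): x\in J\}$ is the graph curve of $A$, and $s(x)=\sqrt{1+(A'(x))^2}$. The kernel $K_\Gamma$ is defined (with the normalizing factor $1/(2\pi)$ omitted, as in the paper) for $w=x+iA(x)$, $z=y+iA(y)$, $x\neq y$, $x,y\in J$, by $K_\Gamma(w,z)=\dfrac{A'(x)-i}{s(x)\,[\,x-y+i(A(x)-A(y))\,]}$; $\mathrm{Re}K_\Gamma$ and $\mathrm{Im}K_\Gamma$ are its real and imaginary parts. For a function $K$ defined off the diagonal and a three-tuple $\mathbf z=(z_1,z_2,z_3)$ of distinct points, $\mathtt S[K](\mathbf z)=\sum_{\sigma\in S_3}K(z_{\sigma(1)},z_{\sigma(2)})\overline{K(z_{\sigma(1)},z_{\sigma(3)})}$, where $S_3$ is the permutation group on three elements. The Menger curvature $c(\mathbf z)$ is $0$ if $z_1,z_2,z_3$ are collinear and otherwise the reciprocal of the radius of the circle through $z_1,z_2,z_3$. *)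

theory Defs
  imports "HOL-Analysis.Analysis"
begin

definition C3_on :: "real set \<Rightarrow> (real \<Rightarrow> real) \<Rightarrow> bool" where
  "C3_on J A \<longleftrightarrow>
     (\<forall>x\<in>J. A differentiable (at x) \<and> deriv A differentiable (at x)
              \<and> deriv (deriv A) differentiable (at x))
     \<and> continuous_on J (deriv (deriv (deriv A)))"

definition gpt :: "(real \<Rightarrow> real) \<Rightarrow> real \<Rightarrow> complex" where
  "gpt A x = Complex x (A x)"

definition sfun :: "(real \<Rightarrow> real) \<Rightarrow> real \<Rightarrow> real" where
  "sfun A x = sqrt (1 + (deriv A x)^2)"

text \<open>Kernel K_Gamma (normalising factor 1/(2 pi) omitted), for w = x + iA(x), z = y + iA(y).\<close>
definition KGamma :: "(real \<Rightarrow> real) \<Rightarrow> complex \<Rightarrow> complex \<Rightarrow> complex" where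
  "KGamma A w z =
     (let x = Re w; y = Re z in
      (complex_of_real (deriv A x) - \<i>) /
      (complex_of_real (sfun A x) * Complex (x - y) (A x - A y)))"

text \<open>S[K](z1,z2,z3) = sum over sigma in S_3 of K(z_s1,z_s2) * conj K(z_s1,z_s3), written out.\<close>
definition Sop :: "(complex \<Rightarrow> complex \<Rightarrow> complex) \<Rightarrow> complex \<Rightarrow> complex \<Rightarrow> complex \<Rightarrow> complex" where
  "Sop K z1 z2 z3 =
      K z1 z2 * cnj (K z1 z3) + K z1 z3 * cnj (K z1 z2)
    + K z2 z1 * cnj (K z2 z3) + K z2 z3 * cnj (K z2 z1)
    + K z3 z1 * cnj (K z3 z2) + K z3 z2 * cnj (K z3 z1)"

definition menger :: "complex \<Rightarrow> complex \<Rightarrow> complex \<Rightarrow> real" where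
  "menger z1 z2 z3 =
     (if collinear {z1, z2, z3} then 0
      else 1 / (THE r. \<exists>c. dist z1 c = r \<and> dist z2 c = r \<and> dist z3 c = r))"

end

theory Submission
  imports Defs
begin

(*
  Write m_ij for the slope of the chord through the i-th and j-th points and A[x1,x2,x3] for the
  second divided difference of A. The cross product of two sides of the triangle is
  (x2 - x1)(x3 - x1)(x3 - x2) A[x1,x2,x3], so the circumradius formula gives
  c^2 = 4 A[x1,x2,x3]^2 / ((1 + m12^2)(1 + m13^2)(1 + m23^2)). As the points merge, the mean value
  theorems for divided differences make the slopes tend to A'(x0) and A[x1,x2,x3] to A''(x0)/2,
  which gives (a).

  Since |A'(x) - i| = s(x), we have K(w,z) conj K(w,z') = 1 / ((w - z) conj (w - z')), so
  S[Re K] + S[Im K] = S[K] equals c^2 by Melnikov's identity for the Cauchy kernel. Finally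
  Re K(w,z) = A[x,x,y] / (s(x)(1 + m^2)) tends to kappa0/2, so S[Re K], twice a sum of three such
  products, tends to 3/2 kappa0^2, and S[Im K] = c^2 - S[Re K] gives the second estimate of (b).
*)

section \<open>Menger curvature\<close>

lemma collinear_iff_cross_eq_0:
  fixes z1 z2 z3 :: complex
  shows "collinear {z1, z2, z3} \<longleftrightarrow> Im (cnj (z2 - z1) * (z3 - z1)) = 0"
proof -
  define p q where "p = z2 - z1" and "q = z3 - z1"
  have "collinear {z1, z2, z3} \<longleftrightarrow> collinear {0, p, q}"
    unfolding p_def q_def using collinear_3[of z2 z1 z3] by (simp add: insert_commute NO_MATCH_def)
  also have "\<dots> \<longleftrightarrow> p = 0 \<or> q = 0 \<or> (\<exists>c. q = c *\<^sub>R p)"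
    by (rule collinear_lemma)
  also have "\<dots> \<longleftrightarrow> Im (cnj p * q) = 0"
  proof (cases "p = 0")
    case False
    have "q = (Re (cnj p * q) / (cmod p)^2) *\<^sub>R p" if "Im (cnj p * q) = 0"
    proof -
      have "Re p * Im q = Im p * Re q" using that by simp
      then have "(cmod p)^2 *\<^sub>R q = Re (cnj p * q) *\<^sub>R p"
        unfolding cmod_power2 by (simp add: complex_eq_iff) algebra
      moreover have "q = (1 / (cmod p)^2) *\<^sub>R ((cmod p)^2 *\<^sub>R q)"
        using False by simp
      ultimately show ?thesis by simp
    qed
    moreover have "Im (cnj p * (c *\<^sub>R p)) = 0" for c
      by simp
    ultimately show ?thesis using False by auto
  qed simp
  finally show ?thesis unfolding p_def q_def .
qed

lemma circumcentre_norm: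
  fixes p q w :: complex
  assumes "2 * (w \<bullet> p) = (cmod p)^2" "2 * (w \<bullet> q) = (cmod q)^2"
  shows "4 * (cmod w)^2 * (Im (cnj p * q))^2 = (cmod p)^2 * (cmod q)^2 * (cmod (q - p))^2"
proof -
  have re: "2 * Re w * Im (cnj p * q) = (cmod p)^2 * Im q - (cmod q)^2 * Im p"
    and im: "2 * Im w * Im (cnj p * q) = (cmod q)^2 * Re p - (cmod p)^2 * Re q"
    using assms unfolding inner_complex_def by (simp_all add: cmod_power2, algebra+)
  have "4 * (cmod w)^2 * (Im (cnj p * q))^2
      = (2 * Re w * Im (cnj p * q))^2 + (2 * Im w * Im (cnj p * q))^2"
    unfolding cmod_power2 by simp algebra
  also have "\<dots> = (cmod p)^2 * (cmod q)^2 * (cmod (q - p))^2"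
    unfolding re im cmod_power2 by simp algebra
  finally show ?thesis .
qed

lemma equidistant_circumradius:
  fixes z1 z2 z3 c :: complex
  assumes "dist z1 c = r" "dist z2 c = r" "dist z3 c = r"
  shows "4 * r^2 * (Im (cnj (z2 - z1) * (z3 - z1)))^2
           = (cmod (z2 - z1))^2 * (cmod (z3 - z1))^2 * (cmod (z3 - z2))^2"
proof -
  have "2 * ((c - z1) \<bullet> (z - z1)) = (cmod (z - z1))^2" if "dist z c = dist z1 c" for z
  proof -
    have "(cmod (c - z1))^2 = (cmod (c - z1 - (z - z1)))^2"
      using that by (simp add: dist_norm norm_minus_commute)
    then show ?thesis unfolding cmod_power2 inner_complex_def by (simp add: power2_diff) algebra
  qed
  from circumcentre_norm[OF this this] assms have
    "4 * (cmod (c - z1))^2 * (Im (cnj (z2 - z1) * (z3 - z1)))^2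
       = (cmod (z2 - z1))^2 * (cmod (z3 - z1))^2 * (cmod (z3 - z2))^2"
    by simp
  then show ?thesis using assms(1) by (simp add: dist_norm norm_minus_commute)
qed

lemma circumcentre_exists:
  fixes z1 z2 z3 :: complex
  assumes "Im (cnj (z2 - z1) * (z3 - z1)) \<noteq> 0"
  obtains c where "dist z2 c = dist z1 c" "dist z3 c = dist z1 c"
proof -
  define p q cr where "p = z2 - z1" and "q = z3 - z1" and "cr = Im (cnj p * q)"
  \<comment> \<open>Cramer's rule for \<open>2 w \<bullet> p = |p|\<^sup>2\<close>, \<open>2 w \<bullet> q = |q|\<^sup>2\<close>\<close>
  define v where "v = Complex ((cmod p)^2 * Im q - (cmod q)^2 * Im p) ((cmod q)^2 * Re p - (cmod p)^2 * Re q)"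
  define w where "w = (1 / (2 * cr)) *\<^sub>R v"
  have "cr \<noteq> 0" using assms by (simp add: cr_def p_def q_def)
  have "v \<bullet> p = (cmod p)^2 * cr" "v \<bullet> q = (cmod q)^2 * cr"
    unfolding v_def cr_def inner_complex_def by simp_all algebra+
  then have "2 * (w \<bullet> z) = (cmod z)^2" if "z \<in> {p, q}" for z
    using that \<open>cr \<noteq> 0\<close> by (auto simp: w_def)
  moreover have "(cmod (w - z))^2 = (cmod w)^2" if "2 * (w \<bullet> z) = (cmod z)^2" for z
    using that unfolding cmod_power2 inner_complex_def by (simp add: power2_diff)
  ultimately have "cmod (w - (z - z1)) = cmod w" if "z - z1 \<in> {p, q}" for z
    using that by (metis power2_eq_iff_nonneg norm_ge_zero)
  then have "dist z (z1 + w) = dist z1 (z1 + w)" if "z \<in> {z2, z3}" for z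
    using that unfolding p_def q_def dist_norm by (auto simp: norm_minus_commute diff_diff_eq2 add.commute)
  then show thesis using that by blast
qed

lemma menger_squared:
  fixes z1 z2 z3 :: complex
  shows "(menger z1 z2 z3)^2 = 4 * (Im (cnj (z2 - z1) * (z3 - z1)))^2
           / ((cmod (z2 - z1))^2 * (cmod (z3 - z1))^2 * (cmod (z3 - z2))^2)"
proof (cases "collinear {z1, z2, z3}")
  case True
  then show ?thesis by (simp add: menger_def collinear_iff_cross_eq_0)
next
  case False
  define cr where "cr = Im (cnj (z2 - z1) * (z3 - z1))"
  define PQD where "PQD = (cmod (z2 - z1))^2 * (cmod (z3 - z1))^2 * (cmod (z3 - z2))^2"
  have "cr \<noteq> 0" using False by (simp add: cr_def collinear_iff_cross_eq_0)
  then obtain c where c: "dist z2 c = dist z1 c" "dist z3 c = dist z1 c"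
    using circumcentre_exists unfolding cr_def by blast
  define r where "r = dist z1 c"
  have r: "4 * r^2 * cr^2 = PQD"
    using equidistant_circumradius[of z1 c r z2 z3] c unfolding r_def cr_def PQD_def by simp
  have uniq: "r' = r" if "dist z1 c' = r'" "dist z2 c' = r'" "dist z3 c' = r'" for r' c'
  proof -
    have "4 * r'^2 * cr^2 = 4 * r^2 * cr^2"
      using equidistant_circumradius[OF that] r unfolding cr_def PQD_def by simp
    then have "r'^2 = r^2" using \<open>cr \<noteq> 0\<close> by simp
    then show ?thesis using that(1) r_def by (metis power2_eq_iff_nonneg zero_le_dist)
  qed
  have "(THE r. \<exists>c. dist z1 c = r \<and> dist z2 c = r \<and> dist z3 c = r) = r"
  proof (rule the_equality)
    show "\<exists>c. dist z1 c = r \<and> dist z2 c = r \<and> dist z3 c = r"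
      using c unfolding r_def by blast
  qed (use uniq in blast)
  then have "(menger z1 z2 z3)^2 = 1 / r^2"
    using False by (simp add: menger_def power_one_over)
  also have "\<dots> = 4 * cr^2 / PQD"
    using r \<open>cr \<noteq> 0\<close> by (auto simp: field_simps)
  finally show ?thesis unfolding cr_def PQD_def .
qed

section \<open>Melnikov's identity\<close>

lemma Sop_of_real:
  "Sop (\<lambda>w z. complex_of_real (f w z)) z1 z2 z3
     = complex_of_real (2 * (f z1 z2 * f z1 z3 + f z2 z1 * f z2 z3 + f z3 z1 * f z3 z2))"
  unfolding Sop_def by (simp add: algebra_simps)

lemma Sop_Re_add_Sop_Im:
  "Sop (\<lambda>w z. complex_of_real (Re (K w z))) z1 z2 z3 + Sop (\<lambda>w z. complex_of_real (Im (K w z))) z1 z2 z3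
     = Sop K z1 z2 z3"
  unfolding Sop_of_real by (simp add: Sop_def complex_eq_iff algebra_simps)

lemma inverse_mult_cnj_add:
  fixes a b :: complex
  shows "1 / a * cnj (1 / b) + 1 / b * cnj (1 / a) = of_real (2 * (a \<bullet> b) / ((cmod a)^2 * (cmod b)^2))"
proof (cases "a = 0 \<or> b = 0")
  case False
  define w where "w = a * cnj b"
  have "w \<noteq> 0" using False by (simp add: w_def)
  have "1 / a * cnj (1 / b) + 1 / b * cnj (1 / a) = (w + cnj w) / (w * cnj w)"
    using \<open>w \<noteq> 0\<close> False by (simp add: w_def field_simps)
  also have "\<dots> = of_real (2 * Re w) / of_real ((cmod w)^2)"
    by (simp only: complex_add_cnj complex_norm_square)
  finally have "1 / a * cnj (1 / b) + 1 / b * cnj (1 / a) = of_real (2 * Re w / (cmod w)^2)"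
    by simp
  moreover have "Re w = a \<bullet> b" "cmod w = cmod a * cmod b"
    by (simp_all add: w_def inner_complex_def norm_mult)
  ultimately show ?thesis
    by (simp add: power_mult_distrib)
qed auto

lemma Sop_inverse_diff_eq_menger_squared:
  fixes z1 z2 z3 :: complex
  assumes "z1 \<noteq> z2" "z1 \<noteq> z3" "z2 \<noteq> z3"
  shows "Sop (\<lambda>w z. 1 / (w - z)) z1 z2 z3 = of_real ((menger z1 z2 z3)^2)"
proof -
  define p q where "p = z2 - z1" and "q = z3 - z1"
  define P Q D s where "P = (cmod p)^2" and "Q = (cmod q)^2" and "D = (cmod (q - p))^2"
    and "s = p \<bullet> q"
  have "P \<noteq> 0" "Q \<noteq> 0" "D \<noteq> 0"
    using assms by (auto simp: P_def Q_def D_def p_def q_def)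
  have D: "D = P + Q - 2 * s"
    unfolding P_def Q_def D_def s_def power2_norm_eq_inner by (simp add: algebra_simps inner_commute)
  have cross: "(Im (cnj p * q))^2 = P * Q - s^2"
    unfolding P_def Q_def s_def cmod_power2 inner_complex_def by simp algebra
  have diffs: "z2 - z1 = p" "z3 - z1 = q" "z1 - z2 = - p" "z1 - z3 = - q" "z2 - z3 = p - q" "z3 - z2 = q - p"
    by (simp_all add: p_def q_def)
  then have "Sop (\<lambda>w z. 1 / (w - z)) z1 z2 z3
      = (1 / (- p) * cnj (1 / (- q)) + 1 / (- q) * cnj (1 / (- p)))
      + (1 / p * cnj (1 / (p - q)) + 1 / (p - q) * cnj (1 / p))
      + (1 / q * cnj (1 / (q - p)) + 1 / (q - p) * cnj (1 / q))"
    unfolding Sop_def by (simp only: add.assoc)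
  also have "\<dots> = of_real (2 * s / (P * Q) + 2 * (P - s) / (P * D) + 2 * (Q - s) / (Q * D))"
    unfolding inverse_mult_cnj_add P_def Q_def D_def s_def
    by (simp add: norm_minus_commute inner_diff_right power2_norm_eq_inner inner_commute)
  also have "2 * s / (P * Q) + 2 * (P - s) / (P * D) + 2 * (Q - s) / (Q * D)
      = (2 * s * D + 2 * (P - s) * Q + 2 * (Q - s) * P) / (P * Q * D)"
    using \<open>P \<noteq> 0\<close> \<open>Q \<noteq> 0\<close> \<open>D \<noteq> 0\<close> by (simp add: field_simps)
  also have "2 * s * D + 2 * (P - s) * Q + 2 * (Q - s) * P = 4 * (P * Q - s^2)"
    unfolding D by algebra
  also have "4 * (P * Q - s^2) / (P * Q * D) = (menger z1 z2 z3)^2"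
    unfolding menger_squared diffs cross[symmetric] by (simp add: P_def Q_def D_def)
  finally show ?thesis .
qed

section \<open>Divided differences\<close>

definition divided_diff :: "(real \<Rightarrow> real) \<Rightarrow> real \<Rightarrow> real \<Rightarrow> real" where
  "divided_diff f x y = (f y - f x) / (y - x)"

definition divided_diff2 :: "(real \<Rightarrow> real) \<Rightarrow> real \<Rightarrow> real \<Rightarrow> real \<Rightarrow> real" where
  "divided_diff2 f x y z = f x / ((x - y) * (x - z)) + f y / ((y - x) * (y - z)) + f z / ((z - x) * (z - y))"

(* the confluent divided difference f[x,x,y] *)
definition taylor_quot :: "(real \<Rightarrow> real) \<Rightarrow> real \<Rightarrow> real \<Rightarrow> real" where
  "taylor_quot f x y = (f y - f x - deriv f x * (y - x)) / (y - x)^2"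

lemma divided_diff_commute: "divided_diff f x y = divided_diff f y x"
  unfolding divided_diff_def by (metis minus_diff_eq minus_divide_divide)

lemma divided_diff2_commute:
  shows "divided_diff2 f x y z = divided_diff2 f y x z"
    and "divided_diff2 f x y z = divided_diff2 f x z y"
  unfolding divided_diff2_def by (simp_all add: mult.commute add.commute add.left_commute)

lemma divided_diff2_eq:
  assumes "x \<noteq> y" "x \<noteq> z" "y \<noteq> z"
  shows "divided_diff2 f x y z = (divided_diff f x z - divided_diff f x y) / (z - y)"
  using assms unfolding divided_diff2_def divided_diff_def by (simp add: divide_simps) (simp add: algebra_simps)

lemma divided_diff_mean_value:
  fixes f f' :: "real \<Rightarrow> real"
  assumes "x \<noteq> y"
    and f': "\<And>t. min x y \<le> t \<Longrightarrow> t \<le> max x y \<Longrightarrow> (f has_real_derivative f' t) (at t)"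
  obtains \<xi> where "min x y < \<xi>" "\<xi> < max x y" "divided_diff f x y = f' \<xi>"
proof -
  have "min x y < max x y" using assms(1) by linarith
  then obtain \<xi> where \<xi>: "min x y < \<xi>" "\<xi> < max x y"
    "f (max x y) - f (min x y) = (max x y - min x y) * f' \<xi>"
    using MVT2[of "min x y" "max x y" f f'] f' by blast
  have "divided_diff f x y = divided_diff f (min x y) (max x y)"
    using divided_diff_commute[of f x y] by (cases "x \<le> y") (simp_all add: min_def max_def)
  with \<xi> \<open>min x y < max x y\<close> show thesis
    using that by (simp add: divided_diff_def)
qed

lemma divided_diff2_mean_value:
  fixes f f' f'' :: "real \<Rightarrow> real"
  assumes "a < b" "b < c"
    and f': "\<And>t. a \<le> t \<Longrightarrow> t \<le> c \<Longrightarrow> (f has_real_derivative f' t) (at t)"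
    and f'': "\<And>t. a \<le> t \<Longrightarrow> t \<le> c \<Longrightarrow> (f' has_real_derivative f'' t) (at t)"
  obtains \<xi> where "a < \<xi>" "\<xi> < c" "divided_diff2 f a b c = f'' \<xi> / 2"
proof -
  define d1 d2 where "d1 = divided_diff f a b" and "d2 = divided_diff2 f a b c"
  define g where "g t = f t - f a - d1 * (t - a) - d2 * ((t - a) * (t - b))" for t
  define g' where "g' t = f' t - d1 - d2 * (2 * t - a - b)" for t
  have g: "(g has_real_derivative g' t) (at t)" if "a \<le> t" "t \<le> c" for t
    unfolding g_def g'_def by (rule derivative_eq_intros f' that refl)+ (simp add: algebra_simps)
  have g': "(g' has_real_derivative f'' t - 2 * d2) (at t)" if "a \<le> t" "t \<le> c" for t
    unfolding g'_def by (rule derivative_eq_intros f'' that refl)+ (simp add: algebra_simps)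
  have "g a = 0" by (simp add: g_def)
  have "g b = 0" using assms(1) by (simp add: g_def d1_def divided_diff_def)
  have d2: "d2 * ((c - a) * (c - b)) = (divided_diff f a c - d1) * (c - a)"
    using assms(1,2) by (simp add: d1_def d2_def divided_diff2_eq)
  have "g c = f c - f a - divided_diff f a c * (c - a)"
    unfolding g_def d2 by (simp add: algebra_simps)
  then have "g c = 0"
    using assms(1,2) by (simp add: divided_diff_def)
  obtain \<eta>1 where \<eta>1: "a < \<eta>1" "\<eta>1 < b" "g' \<eta>1 = 0"
    using MVT2[of a b g g'] g \<open>g a = 0\<close> \<open>g b = 0\<close> assms(1,2) by force
  obtain \<eta>2 where \<eta>2: "b < \<eta>2" "\<eta>2 < c" "g' \<eta>2 = 0"
    using MVT2[of b c g g'] g \<open>g b = 0\<close> \<open>g c = 0\<close> assms(1,2) by force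
  obtain \<xi> where "\<eta>1 < \<xi>" "\<xi> < \<eta>2" "f'' \<xi> - 2 * d2 = 0"
    using MVT2[of \<eta>1 \<eta>2 g' "\<lambda>t. f'' t - 2 * d2"] g' \<eta>1 \<eta>2 by force
  then show thesis using that[of \<xi>] \<eta>1 \<eta>2 unfolding d2_def by simp
qed

lemma taylor_quot_mean_value:
  fixes f f' f'' :: "real \<Rightarrow> real"
  assumes "x \<noteq> y"
    and f': "\<And>t. min x y \<le> t \<Longrightarrow> t \<le> max x y \<Longrightarrow> (f has_real_derivative f' t) (at t)"
    and f'': "\<And>t. min x y \<le> t \<Longrightarrow> t \<le> max x y \<Longrightarrow> (f' has_real_derivative f'' t) (at t)"
  obtains \<xi> where "min x y < \<xi>" "\<xi> < max x y" "taylor_quot f x y = f'' \<xi> / 2"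
proof -
  define diff :: "nat \<Rightarrow> real \<Rightarrow> real" where
    "diff m = (if m = 0 then f else if m = 1 then f' else f'')" for m
  have "\<forall>m t. m < 2 \<and> min x y \<le> t \<and> t \<le> max x y \<longrightarrow> (diff m has_real_derivative diff (Suc m) t) (at t)"
    using f' f'' by (auto simp: diff_def less_2_cases_iff)
  from Taylor[where a="min x y" and b="max x y" and c=x and x=y, OF _ _ this] \<open>x \<noteq> y\<close>
  obtain \<xi> where "min x y < \<xi>" "\<xi> < max x y"
    "f y = (\<Sum>m<2. diff m x / fact m * (y - x) ^ m) + diff 2 \<xi> / fact 2 * (y - x)^2"
    by (fastforce simp: diff_def split: if_splits)
  then have \<xi>: "min x y < \<xi>" "\<xi> < max x y" "f y = f x + f' x * (y - x) + f'' \<xi> / 2 * (y - x)^2"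
    by (simp_all add: diff_def numeral_2_eq_2)
  have "deriv f x = f' x"
    using f' by (intro DERIV_imp_deriv) simp
  then have "taylor_quot f x y = f'' \<xi> / 2"
    using \<xi>(3) \<open>x \<noteq> y\<close> by (simp add: taylor_quot_def)
  with \<xi> show thesis using that by blast
qed

lemma tendsto_intermediate_value:
  fixes x0 :: real and \<rho> :: "'a \<Rightarrow> real" and h :: "real \<Rightarrow> 'b::topological_space"
  assumes "(\<rho> \<longlongrightarrow> 0) F" and "\<forall>\<^sub>F t in F. \<exists>\<xi>. \<bar>\<xi> - x0\<bar> \<le> \<rho> t \<and> g t = h \<xi>"
    and "isCont h x0"
  shows "(g \<longlongrightarrow> h x0) F"
proof -
  define \<xi> where "\<xi> t = (SOME \<xi>. \<bar>\<xi> - x0\<bar> \<le> \<rho> t \<and> g t = h \<xi>)" for t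
  have ev: "\<forall>\<^sub>F t in F. \<bar>\<xi> t - x0\<bar> \<le> \<rho> t \<and> g t = h (\<xi> t)"
    using assms(2) by eventually_elim (unfold \<xi>_def, rule someI_ex)
  have "((\<lambda>t. \<xi> t - x0) \<longlongrightarrow> 0) F"
    by (rule Lim_null_comparison[OF _ assms(1)]) (use ev in \<open>eventually_elim, simp\<close>)
  then have "((\<lambda>t. h (\<xi> t)) \<longlongrightarrow> h x0) F"
    by (rule isCont_tendsto_compose[OF assms(3) LIM_zero_cancel])
  moreover have "\<forall>\<^sub>F t in F. h (\<xi> t) = g t"
    using ev by eventually_elim simp
  ultimately show ?thesis
    by (rule Lim_transform_eventually)
qed

lemma between_abs_le:
  fixes t x y x0 :: real
  shows "min x y \<le> t \<Longrightarrow> t \<le> max x y \<Longrightarrow> \<bar>t - x0\<bar> \<le> \<bar>x - x0\<bar> + \<bar>y - x0\<bar>"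
  by (auto simp: min_def max_def split: if_splits)

lemma symmetric3_wlog:
  fixes P :: "real \<Rightarrow> real \<Rightarrow> real \<Rightarrow> bool"
  assumes swap12: "\<And>a b c. P a b c \<Longrightarrow> P b a c" and swap23: "\<And>a b c. P a b c \<Longrightarrow> P a c b"
    and sorted: "\<And>a b c. a < b \<Longrightarrow> b < c \<Longrightarrow> {a, b, c} = {x, y, z} \<Longrightarrow> P a b c"
    and "x \<noteq> y" "x \<noteq> z" "y \<noteq> z"
  shows "P x y z"
proof -
  have sorted': "P a b c" if "a < b" "b < c" "{a, b, c} = {x, y, z}" for a b c
    using sorted that by blast
  consider "x < y" "y < z" | "x < z" "z < y" | "y < x" "x < z" | "y < z" "z < x" | "z < x" "x < y" | "z < y" "y < x"
    using assms(4-6) by (meson linorder_neqE_linordered_idom)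
  then show ?thesis
  proof cases
    case 1
    then show ?thesis by (intro sorted') auto
  next
    case 2
    then have "P x z y" by (intro sorted') auto
    then show ?thesis by (rule swap23)
  next
    case 3
    then have "P y x z" by (intro sorted') auto
    then show ?thesis by (rule swap12)
  next
    case 4
    then have "P y z x" by (intro sorted') auto
    then show ?thesis by (rule swap12[OF swap23])
  next
    case 5
    then have "P z x y" by (intro sorted') auto
    then show ?thesis by (rule swap23[OF swap12])
  next
    case 6
    then have "P z y x" by (intro sorted') auto
    then show ?thesis by (rule swap23[OF swap12[OF swap23]])
  qed
qed

locale twice_differentiable_near =
  fixes f :: "real \<Rightarrow> real" and x0 r :: real
  assumes radius_pos: "0 < r"
    and differentiable_near:
      "\<And>x. x \<in> ball x0 r \<Longrightarrow> f differentiable (at x) \<and> deriv f differentiable (at x)"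
    and isCont_deriv2: "isCont (deriv (deriv f)) x0"
begin

lemma has_deriv: "x \<in> ball x0 r \<Longrightarrow> (f has_real_derivative deriv f x) (at x)"
  and has_deriv2: "x \<in> ball x0 r \<Longrightarrow> (deriv f has_real_derivative deriv (deriv f) x) (at x)"
  using differentiable_near by (simp_all add: DERIV_deriv_iff_real_differentiable)

lemma isCont_deriv: "isCont (deriv f) x0"
  using DERIV_isCont[OF has_deriv2] radius_pos by simp

lemma eventually_in_ball: "(X \<longlongrightarrow> x0) F \<Longrightarrow> \<forall>\<^sub>F t in F. X t \<in> ball x0 r"
  using radius_pos by (intro topological_tendstoD) auto

lemma between_in_ball:
  "x \<in> ball x0 r \<Longrightarrow> y \<in> ball x0 r \<Longrightarrow> min x y \<le> t \<Longrightarrow> t \<le> max x y \<Longrightarrow> t \<in> ball x0 r"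
  by (auto simp: dist_real_def)

lemma divided_diff_intermediate:
  assumes "x \<in> ball x0 r" "y \<in> ball x0 r" "x \<noteq> y"
  shows "\<exists>\<xi>. \<bar>\<xi> - x0\<bar> \<le> \<bar>x - x0\<bar> + \<bar>y - x0\<bar> \<and> divided_diff f x y = deriv f \<xi>"
proof -
  obtain \<xi> where "min x y < \<xi>" "\<xi> < max x y" "divided_diff f x y = deriv f \<xi>"
    using divided_diff_mean_value[of x y f "deriv f"] has_deriv between_in_ball assms by blast
  then show ?thesis using between_abs_le by (meson less_imp_le)
qed

lemma taylor_quot_intermediate:
  assumes "x \<in> ball x0 r" "y \<in> ball x0 r" "x \<noteq> y"
  shows "\<exists>\<xi>. \<bar>\<xi> - x0\<bar> \<le> \<bar>x - x0\<bar> + \<bar>y - x0\<bar> \<and> taylor_quot f x y = deriv (deriv f) \<xi> / 2"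
proof -
  obtain \<xi> where "min x y < \<xi>" "\<xi> < max x y" "taylor_quot f x y = deriv (deriv f) \<xi> / 2"
    using taylor_quot_mean_value[of x y f "deriv f" "deriv (deriv f)"]
      has_deriv has_deriv2 between_in_ball assms by blast
  then show ?thesis using between_abs_le by (meson less_imp_le)
qed

lemma divided_diff2_intermediate:
  assumes "x \<in> ball x0 r" "y \<in> ball x0 r" "z \<in> ball x0 r" "x \<noteq> y" "x \<noteq> z" "y \<noteq> z"
  shows "\<exists>\<xi>. \<bar>\<xi> - x0\<bar> \<le> \<bar>x - x0\<bar> + \<bar>y - x0\<bar> + \<bar>z - x0\<bar>
           \<and> divided_diff2 f x y z = deriv (deriv f) \<xi> / 2"
proof -
  define P where "P x y z \<longleftrightarrow> (\<exists>\<xi>. \<bar>\<xi> - x0\<bar> \<le> \<bar>x - x0\<bar> + \<bar>y - x0\<bar> + \<bar>z - x0\<bar>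
           \<and> divided_diff2 f x y z = deriv (deriv f) \<xi> / 2)" for x y z
  have "P a b c" if "a < b" "b < c" "{a, b, c} = {x, y, z}" for a b c
  proof -
    have "{a, b, c} \<subseteq> ball x0 r"
      using that(3) assms(1-3) by simp
    then have "a \<in> ball x0 r" "c \<in> ball x0 r"
      by simp_all
    then have "t \<in> ball x0 r" if "a \<le> t" "t \<le> c" for t
      using between_in_ball[of a c t] that \<open>a < b\<close> \<open>b < c\<close> by simp
    then obtain \<xi> where "a < \<xi>" "\<xi> < c" "divided_diff2 f a b c = deriv (deriv f) \<xi> / 2"
      using divided_diff2_mean_value[OF \<open>a < b\<close> \<open>b < c\<close> has_deriv has_deriv2] by blast
    then show ?thesis unfolding P_def by (intro exI[of _ \<xi>]) auto
  qed
  moreover have "P b a c" if "P a b c" for a b c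
    using that unfolding P_def divided_diff2_commute(1)[of f a b c] by (simp add: ac_simps)
  moreover have "P a c b" if "P a b c" for a b c
    using that unfolding P_def divided_diff2_commute(2)[of f a b c] by (simp add: ac_simps)
  ultimately have "P x y z"
    using symmetric3_wlog[of P] assms(4-6) by blast
  then show ?thesis unfolding P_def .
qed

lemma tendsto_divided_diff:
  assumes X: "(X \<longlongrightarrow> x0) F" and Y: "(Y \<longlongrightarrow> x0) F" and "\<forall>\<^sub>F t in F. X t \<noteq> Y t"
  shows "((\<lambda>t. divided_diff f (X t) (Y t)) \<longlongrightarrow> deriv f x0) F"
proof (rule tendsto_intermediate_value[OF _ _ isCont_deriv])
  show "((\<lambda>t. \<bar>X t - x0\<bar> + \<bar>Y t - x0\<bar>) \<longlongrightarrow> 0) F"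
    by (intro tendsto_add_zero tendsto_rabs_zero LIM_zero X Y)
  show "\<forall>\<^sub>F t in F. \<exists>\<xi>. \<bar>\<xi> - x0\<bar> \<le> \<bar>X t - x0\<bar> + \<bar>Y t - x0\<bar> \<and> divided_diff f (X t) (Y t) = deriv f \<xi>"
    using eventually_in_ball[OF X] eventually_in_ball[OF Y] assms(3)
    by eventually_elim (rule divided_diff_intermediate)
qed

lemma isCont_half_deriv2: "isCont (\<lambda>\<xi>. deriv (deriv f) \<xi> / 2) x0"
  using isCont_deriv2 by (intro continuous_intros) simp_all

lemma tendsto_taylor_quot:
  assumes X: "(X \<longlongrightarrow> x0) F" and Y: "(Y \<longlongrightarrow> x0) F" and "\<forall>\<^sub>F t in F. X t \<noteq> Y t"
  shows "((\<lambda>t. taylor_quot f (X t) (Y t)) \<longlongrightarrow> deriv (deriv f) x0 / 2) F"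
proof (rule tendsto_intermediate_value[OF _ _ isCont_half_deriv2])
  show "((\<lambda>t. \<bar>X t - x0\<bar> + \<bar>Y t - x0\<bar>) \<longlongrightarrow> 0) F"
    by (intro tendsto_add_zero tendsto_rabs_zero LIM_zero X Y)
  show "\<forall>\<^sub>F t in F. \<exists>\<xi>. \<bar>\<xi> - x0\<bar> \<le> \<bar>X t - x0\<bar> + \<bar>Y t - x0\<bar>
          \<and> taylor_quot f (X t) (Y t) = deriv (deriv f) \<xi> / 2"
    using eventually_in_ball[OF X] eventually_in_ball[OF Y] assms(3)
    by eventually_elim (rule taylor_quot_intermediate)
qed

lemma tendsto_divided_diff2:
  assumes X: "(X \<longlongrightarrow> x0) F" and Y: "(Y \<longlongrightarrow> x0) F" and Z: "(Z \<longlongrightarrow> x0) F"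
    and "\<forall>\<^sub>F t in F. X t \<noteq> Y t \<and> X t \<noteq> Z t \<and> Y t \<noteq> Z t"
  shows "((\<lambda>t. divided_diff2 f (X t) (Y t) (Z t)) \<longlongrightarrow> deriv (deriv f) x0 / 2) F"
proof (rule tendsto_intermediate_value[OF _ _ isCont_half_deriv2])
  show "((\<lambda>t. \<bar>X t - x0\<bar> + \<bar>Y t - x0\<bar> + \<bar>Z t - x0\<bar>) \<longlongrightarrow> 0) F"
    by (intro tendsto_add_zero tendsto_rabs_zero LIM_zero X Y Z)
  show "\<forall>\<^sub>F t in F. \<exists>\<xi>. \<bar>\<xi> - x0\<bar> \<le> \<bar>X t - x0\<bar> + \<bar>Y t - x0\<bar> + \<bar>Z t - x0\<bar>
          \<and> divided_diff2 f (X t) (Y t) (Z t) = deriv (deriv f) \<xi> / 2"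
    using eventually_in_ball[OF X] eventually_in_ball[OF Y] eventually_in_ball[OF Z] assms(4)
    by eventually_elim (intro divided_diff2_intermediate; simp)
qed

end

section \<open>Triples on the graph\<close>

lemma gpt_diff: "gpt A x - gpt A y = Complex (x - y) (A x - A y)"
  by (simp add: gpt_def complex_eq_iff)

lemma gpt_eq_iff: "gpt A x = gpt A y \<longleftrightarrow> x = y"
  by (auto simp: gpt_def)

lemma sfun_pos: "0 < sfun A x"
  by (simp add: sfun_def add_pos_nonneg)

lemma sfun_squared: "(sfun A x)^2 = 1 + (deriv A x)^2"
  by (simp add: sfun_def add_nonneg_nonneg)

lemma KGamma_gpt:
  "KGamma A (gpt A x) (gpt A y) = (of_real (deriv A x) - \<i>) / (of_real (sfun A x) * (gpt A x - gpt A y))"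
  by (simp add: KGamma_def gpt_diff) (simp add: gpt_def)

lemma KGamma_gpt_mult_cnj:
  "KGamma A (gpt A x) (gpt A y) * cnj (KGamma A (gpt A x) (gpt A y'))
     = 1 / (gpt A x - gpt A y) * cnj (1 / (gpt A x - gpt A y'))"
proof -
  define u where "u = (of_real (deriv A x) - \<i>) / of_real (sfun A x)"
  have "cmod (of_real (deriv A x) - \<i>) = sfun A x"
    by (simp add: sfun_def norm_complex_def)
  then have "cmod u = 1"
    using sfun_pos[of A x] by (simp add: u_def norm_divide)
  then have "u * cnj u = 1"
    by (metis complex_norm_square of_real_1 power_one)
  moreover have "KGamma A (gpt A x) (gpt A z) = u * (1 / (gpt A x - gpt A z))" for z
    unfolding KGamma_gpt u_def by simp
  ultimately show ?thesis
    by (simp add: algebra_simps)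
qed

lemma Sop_KGamma_gpt:
  "Sop (KGamma A) (gpt A x1) (gpt A x2) (gpt A x3)
     = Sop (\<lambda>w z. 1 / (w - z)) (gpt A x1) (gpt A x2) (gpt A x3)"
  unfolding Sop_def KGamma_gpt_mult_cnj ..

lemma Sop_Im_KGamma_gpt:
  assumes "x1 \<noteq> x2" "x1 \<noteq> x3" "x2 \<noteq> x3"
  shows "Sop (\<lambda>w z. of_real (Im (KGamma A w z))) (gpt A x1) (gpt A x2) (gpt A x3)
    = of_real ((menger (gpt A x1) (gpt A x2) (gpt A x3))^2)
      - Sop (\<lambda>w z. of_real (Re (KGamma A w z))) (gpt A x1) (gpt A x2) (gpt A x3)"
proof -
  have "Sop (\<lambda>w z. of_real (Re (KGamma A w z))) (gpt A x1) (gpt A x2) (gpt A x3)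
      + Sop (\<lambda>w z. of_real (Im (KGamma A w z))) (gpt A x1) (gpt A x2) (gpt A x3)
      = Sop (KGamma A) (gpt A x1) (gpt A x2) (gpt A x3)"
    by (rule Sop_Re_add_Sop_Im)
  also have "\<dots> = of_real ((menger (gpt A x1) (gpt A x2) (gpt A x3))^2)"
    unfolding Sop_KGamma_gpt using assms by (intro Sop_inverse_diff_eq_menger_squared) (simp_all add: gpt_eq_iff)
  finally show ?thesis
    by (metis add_diff_cancel_left')
qed

lemma cmod_gpt_diff_squared:
  assumes "x \<noteq> y"
  shows "(cmod (gpt A y - gpt A x))^2 = (y - x)^2 * (1 + (divided_diff A x y)^2)"
  using assms by (simp add: gpt_diff cmod_power2 divided_diff_def field_simps)

lemma Re_KGamma_gpt:
  assumes "x \<noteq> y"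
  shows "Re (KGamma A (gpt A x) (gpt A y)) = taylor_quot A x y / (sfun A x * (1 + (divided_diff A x y)^2))"
proof -
  have "KGamma A (gpt A x) (gpt A y) = ((of_real (deriv A x) - \<i>) / (gpt A x - gpt A y)) / of_real (sfun A x)"
    by (simp add: KGamma_gpt)
  then have "Re (KGamma A (gpt A x) (gpt A y)) = Re ((of_real (deriv A x) - \<i>) / (gpt A x - gpt A y)) / sfun A x"
    by (simp only: Re_divide_of_real)
  also have "Re ((of_real (deriv A x) - \<i>) / (gpt A x - gpt A y))
      = (deriv A x * (x - y) - (A x - A y)) / ((x - y)^2 + (A x - A y)^2)"
    by (simp add: Re_divide gpt_diff)
  also have "deriv A x * (x - y) - (A x - A y) = (y - x)^2 * taylor_quot A x y"
    using assms by (simp add: taylor_quot_def) (simp add: algebra_simps)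
  also have "(x - y)^2 + (A x - A y)^2 = (y - x)^2 * (1 + (divided_diff A x y)^2)"
    using cmod_gpt_diff_squared[OF assms, of A] by (simp add: gpt_diff cmod_power2 power2_commute)
  finally show ?thesis
    using assms by simp
qed

lemma cross_gpt:
  assumes "x1 \<noteq> x2" "x1 \<noteq> x3" "x2 \<noteq> x3"
  shows "Im (cnj (gpt A x2 - gpt A x1) * (gpt A x3 - gpt A x1))
    = (x2 - x1) * (x3 - x1) * (x3 - x2) * divided_diff2 A x1 x2 x3"
proof -
  have "x2 - x1 \<noteq> 0" "x3 - x1 \<noteq> 0" "x3 - x2 \<noteq> 0"
    using assms by simp_all
  have "Im (cnj (gpt A x2 - gpt A x1) * (gpt A x3 - gpt A x1))
      = (x2 - x1) * (A x3 - A x1) - (A x2 - A x1) * (x3 - x1)"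
    by (simp add: gpt_diff algebra_simps)
  also have "\<dots> = (x2 - x1) * (x3 - x1) * (divided_diff A x1 x3 - divided_diff A x1 x2)"
  proof -
    have "A x2 - A x1 = divided_diff A x1 x2 * (x2 - x1)" "A x3 - A x1 = divided_diff A x1 x3 * (x3 - x1)"
      using \<open>x2 - x1 \<noteq> 0\<close> \<open>x3 - x1 \<noteq> 0\<close> by (simp_all add: divided_diff_def)
    then show ?thesis by (simp only:) (simp add: algebra_simps)
  qed
  also have "divided_diff A x1 x3 - divided_diff A x1 x2 = (x3 - x2) * divided_diff2 A x1 x2 x3"
    using divided_diff2_eq[OF assms] \<open>x3 - x2 \<noteq> 0\<close> by simp
  finally show ?thesis
    by (simp add: ac_simps)
qed

lemma menger_gpt:
  assumes "x1 \<noteq> x2" "x1 \<noteq> x3" "x2 \<noteq> x3"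
  shows "(menger (gpt A x1) (gpt A x2) (gpt A x3))^2 = 4 * (divided_diff2 A x1 x2 x3)^2
    / ((1 + (divided_diff A x1 x2)^2) * (1 + (divided_diff A x1 x3)^2) * (1 + (divided_diff A x2 x3)^2))"
  using assms unfolding menger_squared cross_gpt[OF assms] cmod_gpt_diff_squared[OF assms(1)]
    cmod_gpt_diff_squared[OF assms(2)] cmod_gpt_diff_squared[OF assms(3)]
  by (simp add: power_mult_distrib)

definition triples_near :: "real \<Rightarrow> (real \<times> real \<times> real) filter" where
  "triples_near x0 = at (x0, x0, x0) within {(x, y, z). x \<noteq> y \<and> x \<noteq> z \<and> y \<noteq> z}"

lemma tendsto_triples_near:
  shows "(fst \<longlongrightarrow> x0) (triples_near x0)"
    and "((\<lambda>t. fst (snd t)) \<longlongrightarrow> x0) (triples_near x0)"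
    and "((\<lambda>t. snd (snd t)) \<longlongrightarrow> x0) (triples_near x0)"
proof -
  have "((\<lambda>t. t) \<longlongrightarrow> (x0, x0, x0)) (triples_near x0)"
    unfolding triples_near_def by (rule tendsto_ident_at)
  from tendsto_fst[OF this] tendsto_fst[OF tendsto_snd[OF this]] tendsto_snd[OF tendsto_snd[OF this]]
  show "(fst \<longlongrightarrow> x0) (triples_near x0)"
    and "((\<lambda>t. fst (snd t)) \<longlongrightarrow> x0) (triples_near x0)"
    and "((\<lambda>t. snd (snd t)) \<longlongrightarrow> x0) (triples_near x0)"
    by simp_all
qed

lemma eventually_triples_near_distinct:
  "\<forall>\<^sub>F t in triples_near x0. fst t \<noteq> fst (snd t) \<and> fst t \<noteq> snd (snd t) \<and> fst (snd t) \<noteq> snd (snd t)"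
  unfolding triples_near_def eventually_at by (auto intro!: exI[of _ 1])

lemma eventually_triples_near_imp_images:
  assumes "\<forall>\<^sub>F t in triples_near x0. P (g (fst t)) (g (fst (snd t))) (g (snd (snd t)))" and "0 < r"
  obtains \<delta> where "0 < \<delta>" "\<delta> \<le> r"
    and "\<And>z1 z2 z3. z1 \<in> g ` {x0 - \<delta> <..< x0 + \<delta>} \<Longrightarrow> z2 \<in> g ` {x0 - \<delta> <..< x0 + \<delta>}
           \<Longrightarrow> z3 \<in> g ` {x0 - \<delta> <..< x0 + \<delta>} \<Longrightarrow> z1 \<noteq> z2 \<Longrightarrow> z1 \<noteq> z3 \<Longrightarrow> z2 \<noteq> z3
           \<Longrightarrow> P z1 z2 z3"
proof -
  obtain d where "d > 0" and d: "\<And>t. t \<in> {(x, y, z). x \<noteq> y \<and> x \<noteq> z \<and> y \<noteq> z}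
      \<Longrightarrow> t \<noteq> (x0, x0, x0) \<Longrightarrow> dist t (x0, x0, x0) < d \<Longrightarrow> P (g (fst t)) (g (fst (snd t))) (g (snd (snd t)))"
    using assms(1) unfolding triples_near_def eventually_at by blast
  have dist: "dist (x, y, z) (x0, x0, x0) \<le> \<bar>x - x0\<bar> + \<bar>y - x0\<bar> + \<bar>z - x0\<bar>" for x y z
  proof -
    have "dist (x, y, z) (x0, x0, x0) = norm (x - x0, y - x0, z - x0)"
      by (simp add: dist_norm)
    also have "\<dots> \<le> norm (x - x0) + norm (y - x0, z - x0)"
      by (rule norm_Pair_le)
    also have "\<dots> \<le> \<bar>x - x0\<bar> + \<bar>y - x0\<bar> + \<bar>z - x0\<bar>"
      using norm_Pair_le[of "y - x0" "z - x0"] by simp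
    finally show ?thesis .
  qed
  show thesis
  proof (rule that[of "min (d / 3) r"])
    fix z1 z2 z3
    assume "z1 \<in> g ` {x0 - min (d / 3) r <..< x0 + min (d / 3) r}"
      "z2 \<in> g ` {x0 - min (d / 3) r <..< x0 + min (d / 3) r}"
      "z3 \<in> g ` {x0 - min (d / 3) r <..< x0 + min (d / 3) r}" and "z1 \<noteq> z2" "z1 \<noteq> z3" "z2 \<noteq> z3"
    then obtain x y z where x: "x \<in> {x0 - min (d / 3) r <..< x0 + min (d / 3) r}" "z1 = g x"
      and y: "y \<in> {x0 - min (d / 3) r <..< x0 + min (d / 3) r}" "z2 = g y"
      and z: "z \<in> {x0 - min (d / 3) r <..< x0 + min (d / 3) r}" "z3 = g z"
      by blast
    have "x \<noteq> y" "x \<noteq> z" "y \<noteq> z"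
      using x y z \<open>z1 \<noteq> z2\<close> \<open>z1 \<noteq> z3\<close> \<open>z2 \<noteq> z3\<close> by auto
    moreover have "dist (x, y, z) (x0, x0, x0) < d"
      using dist[of x y z] x y z by (auto simp: abs_less_iff)
    ultimately show "P z1 z2 z3"
      using d[of "(x, y, z)"] x y z by auto
  qed (use \<open>d > 0\<close> \<open>0 < r\<close> in auto)
qed

definition menger_kernel_estimates ::
    "(real \<Rightarrow> real) \<Rightarrow> real \<Rightarrow> real \<Rightarrow> complex \<Rightarrow> complex \<Rightarrow> complex \<Rightarrow> bool" where
  "menger_kernel_estimates A x0 \<epsilon> z1 z2 z3 \<longleftrightarrow>
     \<bar>(menger z1 z2 z3)^2 - (deriv (deriv A) x0 / (sfun A x0)^3)^2\<bar> < \<epsilon> \<and>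
     cmod (Sop (\<lambda>w z. complex_of_real (Re (KGamma A w z))) z1 z2 z3
           - of_real (3/2 * (menger z1 z2 z3)^2)) < \<epsilon> \<and>
     cmod (Sop (\<lambda>w z. complex_of_real (Im (KGamma A w z))) z1 z2 z3
           + of_real (1/2 * (menger z1 z2 z3)^2)) < \<epsilon>"

context twice_differentiable_near
begin

lemma tendsto_sfun: "(X \<longlongrightarrow> x0) F \<Longrightarrow> ((\<lambda>t. sfun f (X t)) \<longlongrightarrow> sfun f x0) F"
  unfolding sfun_def by (intro tendsto_intros isCont_tendsto_compose[OF isCont_deriv])

lemma tendsto_Re_KGamma_gpt:
  assumes X: "(X \<longlongrightarrow> x0) F" and Y: "(Y \<longlongrightarrow> x0) F" and "\<forall>\<^sub>F t in F. X t \<noteq> Y t"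
  shows "((\<lambda>t. Re (KGamma f (gpt f (X t)) (gpt f (Y t)))) \<longlongrightarrow> deriv (deriv f) x0 / (sfun f x0)^3 / 2) F"
proof -
  have "1 + (deriv f x0)^2 \<noteq> 0"
    using sfun_pos[of f x0] by (simp flip: sfun_squared)
  then have "((\<lambda>t. taylor_quot f (X t) (Y t) / (sfun f (X t) * (1 + (divided_diff f (X t) (Y t))^2)))
      \<longlongrightarrow> deriv (deriv f) x0 / 2 / (sfun f x0 * (1 + (deriv f x0)^2))) F"
    using sfun_pos[of f x0]
    by (intro tendsto_intros tendsto_taylor_quot tendsto_divided_diff tendsto_sfun X Y assms(3)) auto
  also have "sfun f x0 * (1 + (deriv f x0)^2) = (sfun f x0)^3"
    unfolding sfun_squared[symmetric] by (simp add: power3_eq_cube power2_eq_square)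
  also have "deriv (deriv f) x0 / 2 / (sfun f x0)^3 = deriv (deriv f) x0 / (sfun f x0)^3 / 2"
    by simp
  finally show ?thesis
    by (rule Lim_transform_eventually) (use assms(3) in \<open>eventually_elim, simp add: Re_KGamma_gpt\<close>)
qed

lemma tendsto_menger_gpt:
  assumes X1: "(X1 \<longlongrightarrow> x0) F" and X2: "(X2 \<longlongrightarrow> x0) F" and X3: "(X3 \<longlongrightarrow> x0) F"
    and distinct: "\<forall>\<^sub>F t in F. X1 t \<noteq> X2 t \<and> X1 t \<noteq> X3 t \<and> X2 t \<noteq> X3 t"
  shows "((\<lambda>t. (menger (gpt f (X1 t)) (gpt f (X2 t)) (gpt f (X3 t)))^2)
           \<longlongrightarrow> (deriv (deriv f) x0 / (sfun f x0)^3)^2) F"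
proof -
  have ne: "\<forall>\<^sub>F t in F. X1 t \<noteq> X2 t" "\<forall>\<^sub>F t in F. X1 t \<noteq> X3 t" "\<forall>\<^sub>F t in F. X2 t \<noteq> X3 t"
    using distinct by (auto elim: eventually_mono)
  have "(1 + (deriv f x0)^2) * (1 + (deriv f x0)^2) * (1 + (deriv f x0)^2) \<noteq> 0"
    using sfun_pos[of f x0] by (simp flip: sfun_squared)
  then have "((\<lambda>t. 4 * (divided_diff2 f (X1 t) (X2 t) (X3 t))^2
      / ((1 + (divided_diff f (X1 t) (X2 t))^2) * (1 + (divided_diff f (X1 t) (X3 t))^2)
          * (1 + (divided_diff f (X2 t) (X3 t))^2)))
      \<longlongrightarrow> 4 * (deriv (deriv f) x0 / 2)^2
        / ((1 + (deriv f x0)^2) * (1 + (deriv f x0)^2) * (1 + (deriv f x0)^2))) F"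
    by (intro tendsto_intros tendsto_divided_diff2 tendsto_divided_diff X1 X2 X3 distinct ne)
  also have "4 * (deriv (deriv f) x0 / 2)^2 / ((1 + (deriv f x0)^2) * (1 + (deriv f x0)^2) * (1 + (deriv f x0)^2))
      = (deriv (deriv f) x0 / (sfun f x0)^3)^2"
    by (simp add: sfun_squared[symmetric] power_divide flip: power_mult)
  finally show ?thesis
    by (rule Lim_transform_eventually) (use distinct in \<open>eventually_elim, simp add: menger_gpt\<close>)
qed

lemma tendsto_Sop_Re_KGamma_gpt:
  assumes X1: "(X1 \<longlongrightarrow> x0) F" and X2: "(X2 \<longlongrightarrow> x0) F" and X3: "(X3 \<longlongrightarrow> x0) F"
    and distinct: "\<forall>\<^sub>F t in F. X1 t \<noteq> X2 t \<and> X1 t \<noteq> X3 t \<and> X2 t \<noteq> X3 t"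
  shows "((\<lambda>t. Sop (\<lambda>w z. of_real (Re (KGamma f w z))) (gpt f (X1 t)) (gpt f (X2 t)) (gpt f (X3 t)))
           \<longlongrightarrow> of_real (3/2 * (deriv (deriv f) x0 / (sfun f x0)^3)^2)) F"
proof -
  define R where "R X Y t = Re (KGamma f (gpt f (X t)) (gpt f (Y t)))" for X Y :: "'a \<Rightarrow> real" and t
  define L where "L = deriv (deriv f) x0 / (sfun f x0)^3 / 2"
  have R: "(R X Y \<longlongrightarrow> L) F"
    if "(X, Y) \<in> {(X1, X2), (X1, X3), (X2, X1), (X2, X3), (X3, X1), (X3, X2)}" for X Y
  proof -
    have "(X \<longlongrightarrow> x0) F" "(Y \<longlongrightarrow> x0) F" "\<forall>\<^sub>F t in F. X t \<noteq> Y t"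
      using that X1 X2 X3 distinct by (auto elim: eventually_mono)
    then show ?thesis
      unfolding R_def L_def by (rule tendsto_Re_KGamma_gpt)
  qed
  have "((\<lambda>t. 2 * (R X1 X2 t * R X1 X3 t + R X2 X1 t * R X2 X3 t + R X3 X1 t * R X3 X2 t))
      \<longlongrightarrow> 2 * (L * L + L * L + L * L)) F"
    by (intro tendsto_intros R) auto
  also have "2 * (L * L + L * L + L * L) = 3/2 * (deriv (deriv f) x0 / (sfun f x0)^3)^2"
    by (simp add: L_def power2_eq_square)
  finally show ?thesis
    unfolding Sop_of_real R_def by (rule tendsto_of_real)
qed

lemma eventually_menger_kernel_estimates:
  assumes "\<epsilon> > 0"
  shows "\<forall>\<^sub>F t in triples_near x0.
    menger_kernel_estimates f x0 \<epsilon> (gpt f (fst t)) (gpt f (fst (snd t))) (gpt f (snd (snd t)))"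
proof -
  define F where "F = triples_near x0"
  define c2 SR SI where
    "c2 t = (menger (gpt f (fst t)) (gpt f (fst (snd t))) (gpt f (snd (snd t))))^2" and
    "SR t = Sop (\<lambda>w z. of_real (Re (KGamma f w z))) (gpt f (fst t)) (gpt f (fst (snd t))) (gpt f (snd (snd t)))" and
    "SI t = Sop (\<lambda>w z. of_real (Im (KGamma f w z))) (gpt f (fst t)) (gpt f (fst (snd t))) (gpt f (snd (snd t)))"
    for t
  note lim = tendsto_triples_near[of x0, folded F_def]
  note distinct = eventually_triples_near_distinct[of x0, folded F_def]
  have c2: "(c2 \<longlongrightarrow> (deriv (deriv f) x0 / (sfun f x0)^3)^2) F"
    unfolding c2_def by (rule tendsto_menger_gpt[OF lim distinct])
  have "((\<lambda>t. SR t - of_real (3/2 * c2 t)) \<longlongrightarrow>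
      of_real (3/2 * (deriv (deriv f) x0 / (sfun f x0)^3)^2) - of_real (3/2 * (deriv (deriv f) x0 / (sfun f x0)^3)^2)) F"
    unfolding SR_def by (intro tendsto_intros tendsto_Sop_Re_KGamma_gpt[OF lim distinct] c2)
  then have SR: "((\<lambda>t. SR t - of_real (3/2 * c2 t)) \<longlongrightarrow> 0) F"
    by simp
  have SI: "\<forall>\<^sub>F t in F. SI t + of_real (1/2 * c2 t) = - (SR t - of_real (3/2 * c2 t))"
    using distinct by eventually_elim (simp add: SI_def SR_def c2_def Sop_Im_KGamma_gpt)
  show ?thesis
    using tendstoD[OF c2 assms] tendstoD[OF SR assms] SI unfolding F_def[symmetric]
    by eventually_elim (simp add: menger_kernel_estimates_def c2_def SR_def SI_def dist_norm norm_minus_commute)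
qed

end

lemma C3_on_twice_differentiable_near:
  assumes "C3_on J A" "0 < r" "ball x0 r \<subseteq> J"
  shows "twice_differentiable_near A x0 r"
proof
  show "\<And>x. x \<in> ball x0 r \<Longrightarrow> A differentiable (at x) \<and> deriv A differentiable (at x)"
    using assms(1,3) unfolding C3_on_def by blast
  have "x0 \<in> J"
    using assms(2,3) by auto
  then have "deriv (deriv A) differentiable (at x0)"
    using assms(1) unfolding C3_on_def by blast
  then show "isCont (deriv (deriv A)) x0"
    by (rule differentiable_imp_continuous_within)
qed (fact assms(2))

theorem theorem1p1:
  fixes A :: "real \<Rightarrow> real" and J :: "real set" and x0 :: real
  assumes "open J" and "is_interval J" and "J \<noteq> {}"
    and "C3_on J A" and "x0 \<in> J" and "deriv (deriv A) x0 \<noteq> 0"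
  shows "\<forall>\<epsilon>>0. \<exists>\<delta>>0. {x0 - \<delta> <..< x0 + \<delta>} \<subseteq> J \<and>
     (\<forall>z1 z2 z3. z1 \<in> gpt A ` {x0 - \<delta> <..< x0 + \<delta>} \<and> z2 \<in> gpt A ` {x0 - \<delta> <..< x0 + \<delta>}
        \<and> z3 \<in> gpt A ` {x0 - \<delta> <..< x0 + \<delta>} \<and> z1 \<noteq> z2 \<and> z1 \<noteq> z3 \<and> z2 \<noteq> z3 \<longrightarrow>
       \<bar>(menger z1 z2 z3)^2 - (deriv (deriv A) x0 / (sfun A x0)^3)^2\<bar> < \<epsilon> \<and>
       cmod (Sop (\<lambda>w z. complex_of_real (Re (KGamma A w z))) z1 z2 z3
             - of_real (3/2 * (menger z1 z2 z3)^2)) < \<epsilon> \<and>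
       cmod (Sop (\<lambda>w z. complex_of_real (Im (KGamma A w z))) z1 z2 z3
             + of_real (1/2 * (menger z1 z2 z3)^2)) < \<epsilon>)"
proof -
  obtain r where "0 < r" "ball x0 r \<subseteq> J"
    using assms(1,5) openE by blast
  then interpret twice_differentiable_near A x0 r
    using C3_on_twice_differentiable_near assms(4) by blast
  have "\<exists>\<delta>>0. {x0 - \<delta> <..< x0 + \<delta>} \<subseteq> J \<and>
     (\<forall>z1 z2 z3. z1 \<in> gpt A ` {x0 - \<delta> <..< x0 + \<delta>} \<and> z2 \<in> gpt A ` {x0 - \<delta> <..< x0 + \<delta>}
        \<and> z3 \<in> gpt A ` {x0 - \<delta> <..< x0 + \<delta>} \<and> z1 \<noteq> z2 \<and> z1 \<noteq> z3 \<and> z2 \<noteq> z3 \<longrightarrow>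
       menger_kernel_estimates A x0 \<epsilon> z1 z2 z3)" if "\<epsilon> > 0" for \<epsilon>
  proof -
    obtain \<delta> where "0 < \<delta>" "\<delta> \<le> r"
      and "\<And>z1 z2 z3. z1 \<in> gpt A ` {x0 - \<delta> <..< x0 + \<delta>} \<Longrightarrow> z2 \<in> gpt A ` {x0 - \<delta> <..< x0 + \<delta>}
           \<Longrightarrow> z3 \<in> gpt A ` {x0 - \<delta> <..< x0 + \<delta>} \<Longrightarrow> z1 \<noteq> z2 \<Longrightarrow> z1 \<noteq> z3 \<Longrightarrow> z2 \<noteq> z3
           \<Longrightarrow> menger_kernel_estimates A x0 \<epsilon> z1 z2 z3"
      using eventually_triples_near_imp_images[where P="menger_kernel_estimates A x0 \<epsilon>" and g="gpt A"]
        eventually_menger_kernel_estimates[OF \<open>\<epsilon> > 0\<close>] \<open>0 < r\<close> by blast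
    moreover have "{x0 - \<delta> <..< x0 + \<delta>} \<subseteq> J"
      using \<open>\<delta> \<le> r\<close> \<open>ball x0 r \<subseteq> J\<close> by (force simp: dist_real_def)
    ultimately show ?thesis
      by blast
  qed
  then show ?thesis
    unfolding menger_kernel_estimates_def by blast
qed

end
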